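(* Let $q$ be a prime power and $n, r$ integers with $0 \le r \le \lfloor n/2\rfloor$. For all integers $0 \le u, s \le r$, the function $d \mapsto I_{\mathrm{C}}(u,s,d)$ is non-increasing on $\{0,1,\ldots,r\}$; that is, $I_{\mathrm{C}}(u,s,d) \le I_{\mathrm{C}}(u,s,d-1)$ for all $1 \le d \le r$.
   Context: $E_r(q,n)$ is the set of $r$-dimensional subspaces of $\mathrm{GF}(q)^n$, with injection distance $d_{\mathrm{I}}(U,V) = \dim(U+V) - \min\{\dim U,\dim V\}$. For $U \in E_r(q,n)$, $B_t(U) = \{V \in E_r(q,n) : d_{\mathrm{I}}(U,V) \le t\}$. For $0 \le u,s,d \le r$, $I_{\mathrm{C}}(u,s,d) = |B_u(U) \cap B_s(V)|$ for any $U,V \in E_r(q,n)$ with $d_{\mathrm{I}}(U,V) = d$ (this number depends only on $u,s,d$). *)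

theory Defs
  imports "HOL-Analysis.Analysis"
begin

text \<open>GF(q)^n is modelled as the type a^n with a a finite field
  (so q = CARD('a) is a prime power) and n = CARD('n).\<close>

definition Grass :: "nat \<Rightarrow> ('a::{field,finite} ^ 'n) set set" where
  "Grass r = {U. vec.subspace U \<and> vec.dim U = r}"

definition sub_sum :: "('a::field ^ 'n) set \<Rightarrow> ('a ^ 'n) set \<Rightarrow> ('a ^ 'n) set" where
  "sub_sum U V = {x + y | x y. x \<in> U \<and> y \<in> V}"

definition inj_dist :: "('a::field ^ 'n) set \<Rightarrow> ('a ^ 'n) set \<Rightarrow> nat" where
  "inj_dist U V = vec.dim (sub_sum U V) - min (vec.dim U) (vec.dim V)"

definition ball_I :: "nat \<Rightarrow> nat \<Rightarrow> ('a::{field,finite} ^ 'n) set \<Rightarrow> ('a ^ 'n) set set" where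
  "ball_I r t U = {V \<in> Grass r. inj_dist U V \<le> t}"

end

theory Submission
  imports Defs
begin

text \<open>
  The group of linear automorphisms acts transitively on pairs of \<open>r\<close>-spaces with a given
  intersection dimension (extend a basis of \<open>U \<inter> V\<close> to compatible bases of \<open>U\<close> and \<open>V\<close>), so
  the count depends on \<open>d\<close> only. It therefore suffices, for \<open>U, V\<close> with \<open>dim (U \<inter> V) < r\<close>,
  to find \<open>V'\<close> with \<open>dim (U \<inter> V') = dim (U \<inter> V) + 1\<close> and at least as many common neighbours.

  Pick \<open>a \<in> U - V\<close>, \<open>b \<in> V - U\<close> and linear functionals \<open>\<alpha>, \<beta>\<close> with \<open>\<alpha> V = 0 = \<beta> U\<close> and
  \<open>\<alpha> a = 1 = \<beta> b\<close>; let \<open>U0 = U \<inter> ker \<alpha>\<close>, \<open>V0 = V \<inter> ker \<beta>\<close>, \<open>K = ker \<alpha> \<inter> ker \<beta>\<close> and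
  \<open>V' = \<langle>a\<rangle> + V0\<close>. The spaces \<open>W\<close> with \<open>dim (U \<inter> W) \<ge> i\<close> and \<open>dim (V \<inter> W) \<ge> j\<close> are mapped
  injectively to those with \<open>dim (U \<inter> W) \<ge> i\<close> and \<open>dim (V' \<inter> W) \<ge> j\<close>: if already
  \<open>dim (W \<inter> U0) \<ge> i\<close>, apply the involution exchanging \<open>a\<close> and \<open>b\<close> and fixing \<open>K\<close> (it maps
  \<open>V\<close> onto \<open>V'\<close>); if \<open>W\<close> is already close to \<open>V'\<close>, keep it; otherwise apply a shear
  \<open>v \<mapsto> v + (\<beta> v - \<alpha> v) z\<close> with \<open>z \<in> K\<close> chosen canonically from \<open>W\<close>. The shear fixes \<open>W \<inter> K\<close>,
  creates vectors of \<open>U\<close> and of \<open>V'\<close> outside \<open>ker \<alpha>\<close>, and leaves \<open>V\<close> meeting the image only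
  in \<open>V0\<close>. These properties recover from the image which case was used, giving injectivity.
\<close>

section \<open>Linear algebra in coordinate spaces\<close>

lemma separating_functional_exists:
  fixes S :: "('a::field ^ 'n) set"
  assumes S: "vec.subspace S" and x: "x \<notin> S"
  shows "\<exists>f. Vector_Spaces.linear (*s) (*) f \<and> (\<forall>v\<in>S. f v = 0) \<and> f x = 1"
proof -
  interpret p: vector_space_pair "(*s) :: 'a \<Rightarrow> 'a ^ 'n \<Rightarrow> _" "(*) :: 'a \<Rightarrow> 'a \<Rightarrow> 'a" ..
  obtain B where B: "B \<subseteq> S" "vec.independent B" "S \<subseteq> vec.span B"
    by (rule vec.basis_exists)
  have ind: "vec.independent (insert x B)"
    using x B by (metis vec.independent_insertI vec.span_minimal[OF B(1) S] subset_antisym)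
  obtain g where g: "Vector_Spaces.linear (*s) (*) g" "\<forall>y\<in>insert x B. g y = (if y = x then 1 else 0)"
    using p.linear_independent_extend[OF ind, of "\<lambda>y. if y = x then 1 else 0"] by blast
  have "g v = 0" if "v \<in> S" for v
    using g x B that by (metis (no_types, lifting) insertCI p.linear_eq_0_on_span subsetD)
  then show ?thesis using g by auto
qed

lemma linear_of_add_scale:
  fixes f :: "'a::field ^ 'n \<Rightarrow> 'a ^ 'n"
  assumes "\<And>x y. f (x + y) = f x + f y" "\<And>c x. f (c *s x) = c *s f x"
  shows "Vector_Spaces.linear (*s) (*s) f"
  unfolding Vector_Spaces.linear_iff using assms vec.vector_space_axioms by blast

lemma subspace_kernel_Int:
  assumes "vec.subspace X" and f: "Vector_Spaces.linear (*s) (*) f"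
  shows "vec.subspace {x\<in>X. f x = 0}"
proof -
  interpret f: Vector_Spaces.linear "(*s)" "(*)" f by (fact f)
  have "{x\<in>X. f x = 0} = X \<inter> {x. f x = 0}" by blast
  then show ?thesis using vec.subspace_inter[OF assms(1) f.subspace_kernel] by simp
qed

lemma dim_le_Suc_dim_kernel:
  fixes X :: "('a::field ^ 'n) set"
  assumes X: "vec.subspace X" and f: "Vector_Spaces.linear (*s) (*) f"
  shows "vec.dim X \<le> vec.dim {x\<in>X. f x = 0} + 1"
proof (cases "\<forall>x\<in>X. f x = 0")
  case True
  then have "{x\<in>X. f x = 0} = X" by auto
  then show ?thesis by simp
next
  case False
  interpret f: Vector_Spaces.linear "(*s)" "(*)" f by (fact f)
  obtain w where w: "w \<in> X" "f w \<noteq> 0" using False by auto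
  let ?K = "{x\<in>X. f x = 0}"
  have "X \<subseteq> vec.span (insert w ?K)"
  proof
    fix x assume x: "x \<in> X"
    let ?k = "f x / f w"
    have "x - ?k *s w \<in> ?K"
      using x w X by (simp add: vec.subspace_diff vec.subspace_scale f.diff f.scale)
    then show "x \<in> vec.span (insert w ?K)"
      by (subst vec.span_breakdown_eq) (blast intro: vec.span_base)
  qed
  then have "vec.dim X \<le> vec.dim (insert w ?K)"
    by (metis vec.dim_span vec.dim_subset)
  also have "\<dots> \<le> vec.dim ?K + 1"
    by (simp add: vec.dim_insert)
  finally show ?thesis .
qed

lemma dim_Suc_le_of_insert_subset:
  fixes K :: "('a::field ^ 'n) set"
  assumes K: "vec.subspace K" and w: "w \<notin> K" and sub: "insert w K \<subseteq> Y"
  shows "vec.dim K + 1 \<le> vec.dim Y"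
proof -
  have "w \<notin> vec.span K" using K w by (metis vec.span_eq_iff)
  then have "vec.dim (insert w K) = vec.dim K + 1" by (simp add: vec.dim_insert)
  moreover have "vec.dim (insert w K) \<le> vec.dim Y" using sub by (rule vec.dim_subset)
  ultimately show ?thesis by simp
qed

lemma ex_kernel_plus_in:
  fixes X W :: "('a::field ^ 'n) set"
  assumes X: "vec.subspace X" and W: "vec.subspace W" and f: "Vector_Spaces.linear (*s) (*) f"
    and x0: "x0 \<in> X" "f x0 = 1" and lt: "vec.dim (W \<inter> {x\<in>X. f x = 0}) < vec.dim (X \<inter> W)"
  shows "\<exists>m\<in>X. f m = 0 \<and> m + x0 \<in> W"
proof -
  interpret f: Vector_Spaces.linear "(*s)" "(*)" f by (fact f)
  have "\<not> (\<forall>x\<in>X \<inter> W. f x = 0)"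
  proof
    assume "\<forall>x\<in>X \<inter> W. f x = 0"
    then have "W \<inter> {x\<in>X. f x = 0} = X \<inter> W" by auto
    then show False using lt by simp
  qed
  then obtain w where w: "w \<in> X" "w \<in> W" "f w \<noteq> 0" by auto
  define m where "m = (1 / f w) *s w - x0"
  have "m \<in> X" unfolding m_def using w x0 X by (simp add: vec.subspace_diff vec.subspace_scale)
  moreover have "f m = 0" unfolding m_def using w x0 by (simp add: f.diff f.scale)
  moreover have "m + x0 \<in> W" unfolding m_def using w W by (simp add: vec.subspace_scale)
  ultimately show ?thesis by blast
qed

lemma span_eq_of_basis:
  assumes "B \<subseteq> S" "vec.subspace S" "S \<subseteq> vec.span B"
  shows "vec.span B = S"
  by (rule subset_antisym[OF vec.span_minimal[OF assms(1,2)] assms(3)])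

lemma sub_sum_eq_span:
  assumes "vec.subspace A" "vec.subspace B"
  shows "sub_sum A B = vec.span (A \<union> B)"
  unfolding vec.span_Un sub_sum_def using assms by (simp add: vec.span_eq_iff[THEN iffD2])

lemma subspace_sub_sum:
  assumes "vec.subspace A" "vec.subspace B"
  shows "vec.subspace (sub_sum A B)"
  using sub_sum_eq_span[OF assms] by simp

lemma dim_sub_sum_Int:
  assumes "vec.subspace A" "vec.subspace B"
  shows "vec.dim (sub_sum A B) + vec.dim (A \<inter> B) = vec.dim A + vec.dim B"
  unfolding sub_sum_def by (rule vec.dim_sums_Int[OF assms])

lemma sub_sum_memI: "x \<in> A \<Longrightarrow> y \<in> B \<Longrightarrow> x + y \<in> sub_sum A B"
  unfolding sub_sum_def by blast

lemma sub_sum_memE: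
  assumes "v \<in> sub_sum A B"
  obtains x y where "x \<in> A" "y \<in> B" "v = x + y"
  using assms unfolding sub_sum_def by blast

lemma sub_sum_left: "vec.subspace B \<Longrightarrow> A \<subseteq> sub_sum A B"
  using sub_sum_memI[of _ A 0 B] vec.subspace_0 by fastforce

lemma sub_sum_right: "vec.subspace A \<Longrightarrow> B \<subseteq> sub_sum A B"
  using sub_sum_memI[of 0 A _ B] vec.subspace_0 by fastforce

lemma complement_subspace_exists:
  fixes I A :: "('a::field ^ 'n) set"
  assumes I: "vec.subspace I" and A: "vec.subspace A" and IA: "I \<subseteq> A"
  shows "\<exists>C. vec.subspace C \<and> C \<subseteq> A \<and> C \<inter> I \<subseteq> {0} \<and> (\<forall>x\<in>A. \<exists>y\<in>C. x - y \<in> I)"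
proof -
  obtain BI where BI: "BI \<subseteq> I" "vec.independent BI" "I \<subseteq> vec.span BI"
    by (rule vec.basis_exists)
  obtain BA where BA: "BI \<subseteq> BA" "BA \<subseteq> A" "vec.independent BA" "A \<subseteq> vec.span BA"
    by (rule vec.maximal_independent_subset_extend[of BI A]) (use BI IA in auto)
  have spI: "vec.span BI = I" by (rule span_eq_of_basis[OF BI(1) I BI(3)])
  have spA: "vec.span BA = A" by (rule span_eq_of_basis[OF BA(2) A BA(4)])
  define C where "C = vec.span (BA - BI)"
  have sC: "vec.subspace C" unfolding C_def by simp
  have CI: "sub_sum C I = A"
  proof -
    have "sub_sum C I = vec.span ((BA - BI) \<union> BI)"
      unfolding sub_sum_def C_def vec.span_Un spI[symmetric] by simp
    also have "\<dots> = A" using BA(1) spA by (simp add: Un_absorb2)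
    finally show ?thesis .
  qed
  have CA: "C \<subseteq> A" using CI sub_sum_left[OF I] by blast
  have CI0: "C \<inter> I \<subseteq> {0}"
  proof -
    have iD: "vec.independent (BA - BI)" using BA(3) by (rule vec.independent_mono) auto
    have fBA: "finite BA" using BA(3) by (rule vec.finiteI_independent)
    have "card BA = card (BA - BI) + card BI"
      using card_Diff_subset[OF finite_subset[OF BA(1) fBA] BA(1)] card_mono[OF fBA BA(1)] by simp
    moreover have "vec.dim C = card (BA - BI)"
      unfolding C_def by (rule vec.dim_span_eq_card_independent[OF iD])
    moreover have "vec.dim I = card BI"
      using vec.dim_span_eq_card_independent[OF BI(2)] spI by simp
    moreover have "vec.dim A = card BA"
      using vec.dim_span_eq_card_independent[OF BA(3)] spA by simp
    ultimately have "vec.dim (C \<inter> I) = 0" using dim_sub_sum_Int[OF sC I] CI by simp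
    then show ?thesis by simp
  qed
  have comp: "\<exists>y\<in>C. x - y \<in> I" if "x \<in> A" for x
  proof -
    obtain y i where "y \<in> C" "i \<in> I" "x = y + i"
      using \<open>x \<in> A\<close> CI by (auto elim: sub_sum_memE)
    then have "x - y \<in> I" by simp
    then show ?thesis using \<open>y \<in> C\<close> by blast
  qed
  show ?thesis by (intro exI[of _ C] conjI ballI sC CA CI0 comp)
qed

lemma bij_betw_overlapping_pairs:
  assumes fin: "finite A1" "finite B1" "finite A2" "finite B2"
    and card: "card A1 = card A2" "card B1 = card B2" "card (A1 \<inter> B1) = card (A2 \<inter> B2)"
  obtains f where "bij_betw f (A1 \<union> B1) (A2 \<union> B2)" "f ` A1 = A2" "f ` B1 = B2"
proof -
  have "card (A1 - B1) = card (A2 - B2)" "card (B1 - A1) = card (B2 - A2)"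
    using fin card by (simp_all add: card_Diff_subset_Int Int_commute)
  then obtain f1 f2 f3 where f1: "bij_betw f1 (A1 \<inter> B1) (A2 \<inter> B2)"
    and f2: "bij_betw f2 (A1 - B1) (A2 - B2)" and f3: "bij_betw f3 (B1 - A1) (B2 - A2)"
    using finite_same_card_bij fin card(3) by (metis finite_Diff finite_Int)
  define f where "f x = (if x \<in> A1 then if x \<in> B1 then f1 x else f2 x else f3 x)" for x
  have b1: "bij_betw f (A1 \<inter> B1) (A2 \<inter> B2)"
    using f1 by (rule bij_betw_cong[THEN iffD1, rotated]) (auto simp: f_def)
  have b2: "bij_betw f (A1 - B1) (A2 - B2)"
    using f2 by (rule bij_betw_cong[THEN iffD1, rotated]) (auto simp: f_def)
  have b3: "bij_betw f (B1 - A1) (B2 - A2)"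
    using f3 by (rule bij_betw_cong[THEN iffD1, rotated]) (auto simp: f_def)
  have bA: "bij_betw f ((A1 \<inter> B1) \<union> (A1 - B1)) ((A2 \<inter> B2) \<union> (A2 - B2))"
    by (rule bij_betw_combine[OF b1 b2]) auto
  have bB: "bij_betw f ((A1 \<inter> B1) \<union> (B1 - A1)) ((A2 \<inter> B2) \<union> (B2 - A2))"
    by (rule bij_betw_combine[OF b1 b3]) auto
  have bAB: "bij_betw f (((A1 \<inter> B1) \<union> (A1 - B1)) \<union> (B1 - A1)) (((A2 \<inter> B2) \<union> (A2 - B2)) \<union> (B2 - A2))"
    by (rule bij_betw_combine[OF bA b3]) auto
  have eqs: "(A1 \<inter> B1) \<union> (A1 - B1) = A1" "(A2 \<inter> B2) \<union> (A2 - B2) = A2"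
    "(A1 \<inter> B1) \<union> (B1 - A1) = B1" "(A2 \<inter> B2) \<union> (B2 - A2) = B2"
    "A1 \<union> (B1 - A1) = A1 \<union> B1" "A2 \<union> (B2 - A2) = A2 \<union> B2" by auto
  show ?thesis
    using bA bB bAB unfolding eqs by (intro that[of f]) (simp_all add: bij_betw_def)
qed

lemma compatible_bases_exist:
  fixes U V :: "('a::field ^ 'n) set"
  assumes sU: "vec.subspace U" and sV: "vec.subspace V"
  obtains BU BV where "vec.span BU = U" "vec.span BV = V" "vec.independent (BU \<union> BV)"
    "card BU = vec.dim U" "card BV = vec.dim V" "card (BU \<inter> BV) = vec.dim (U \<inter> V)"
proof -
  obtain BC where BC: "BC \<subseteq> U \<inter> V" "vec.independent BC" "U \<inter> V \<subseteq> vec.span BC"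
    "card BC = vec.dim (U \<inter> V)"
    by (rule vec.basis_exists)
  obtain BU where BU: "BC \<subseteq> BU" "BU \<subseteq> U" "vec.independent BU" "U \<subseteq> vec.span BU"
    by (rule vec.maximal_independent_subset_extend[of BC U]) (use BC in auto)
  obtain BV where BV: "BC \<subseteq> BV" "BV \<subseteq> V" "vec.independent BV" "V \<subseteq> vec.span BV"
    by (rule vec.maximal_independent_subset_extend[of BC V]) (use BC in auto)
  have spU: "vec.span BU = U" by (rule span_eq_of_basis[OF BU(2) sU BU(4)])
  have spV: "vec.span BV = V" by (rule span_eq_of_basis[OF BV(2) sV BV(4)])
  have cU: "card BU = vec.dim U" and cV: "card BV = vec.dim V"
    using vec.dim_span_eq_card_independent BU(3) BV(3) spU spV by metis+
  have fU: "finite BU" and fV: "finite BV"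
    using BU(3) BV(3) by (simp_all add: vec.finiteI_independent)
  have "BU \<inter> BV \<subseteq> BC"
  proof
    fix x assume x: "x \<in> BU \<inter> BV"
    show "x \<in> BC"
    proof (rule ccontr)
      assume "x \<notin> BC"
      then have "vec.span BC \<subseteq> vec.span (BU - {x})" using BU(1) by (intro vec.span_mono) auto
      moreover have "x \<in> vec.span BC" using x BU(2) BV(2) BC(3) by auto
      ultimately show False using x BU(3) unfolding vec.dependent_def by auto
    qed
  qed
  then have int: "BU \<inter> BV = BC" using BU(1) BV(1) by auto
  have ind: "vec.independent (BU \<union> BV)"
  proof (rule vec.card_le_dim_spanning[of _ "sub_sum U V"])
    show "BU \<union> BV \<subseteq> sub_sum U V"
      using BU(2) BV(2) sub_sum_left[OF sV, of U] sub_sum_right[OF sU, of V] by blast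
    show "sub_sum U V \<subseteq> vec.span (BU \<union> BV)"
      unfolding vec.span_Un sub_sum_def spU spV by simp
    show "finite (BU \<union> BV)" using fU fV by simp
    show "card (BU \<union> BV) \<le> vec.dim (sub_sum U V)"
      using card_Un_Int[OF fU fV] dim_sub_sum_Int[OF sU sV] int BC(4) cU cV by simp
  qed
  show ?thesis by (rule that[OF spU spV ind cU cV]) (simp add: int BC(4))
qed

lemma linear_iso_between_pairs:
  fixes U1 V1 U2 V2 :: "('a::field ^ 'n) set"
  assumes sub: "vec.subspace U1" "vec.subspace V1" "vec.subspace U2" "vec.subspace V2"
    and dim: "vec.dim U1 = vec.dim U2" "vec.dim V1 = vec.dim V2"
      "vec.dim (U1 \<inter> V1) = vec.dim (U2 \<inter> V2)"
  obtains g where "Vector_Spaces.linear (*s) (*s) g" "inj g" "g ` U1 = U2" "g ` V1 = V2"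
proof -
  obtain A1 B1 where P1: "vec.span A1 = U1" "vec.span B1 = V1" "vec.independent (A1 \<union> B1)"
    "card A1 = vec.dim U1" "card B1 = vec.dim V1" "card (A1 \<inter> B1) = vec.dim (U1 \<inter> V1)"
    by (rule compatible_bases_exist[OF sub(1,2)])
  obtain A2 B2 where P2: "vec.span A2 = U2" "vec.span B2 = V2" "vec.independent (A2 \<union> B2)"
    "card A2 = vec.dim U2" "card B2 = vec.dim V2" "card (A2 \<inter> B2) = vec.dim (U2 \<inter> V2)"
    by (rule compatible_bases_exist[OF sub(3,4)])
  have "finite (A1 \<union> B1)" "finite (A2 \<union> B2)"
    by (rule vec.finiteI_independent[OF P1(3)], rule vec.finiteI_independent[OF P2(3)])
  then obtain f where f: "bij_betw f (A1 \<union> B1) (A2 \<union> B2)" "f ` A1 = A2" "f ` B1 = B2"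
    using bij_betw_overlapping_pairs[of A1 B1 A2 B2] P1 P2 dim by auto
  obtain g where g: "Vector_Spaces.linear (*s) (*s) g" "inj g" "\<forall>x\<in>A1 \<union> B1. g x = f x"
    using vec.linear_independent_extend_inj[of "A1 \<union> B1" f] P1(3) P2(3) f(1)
    by (auto simp: bij_betw_def)
  have "g ` A1 = A2" "g ` B1 = B2" using g(3) f(2,3) by (auto simp: image_def)
  then have "g ` U1 = U2" "g ` V1 = V2"
    using vec.linear_span_image[OF g(1)] P1(1,2) P2(1,2) by metis+
  then show ?thesis by (rule that[OF g(1,2)])
qed

section \<open>Intersections of balls in the Grassmannian\<close>

lemma finite_set_of_subspaces: "finite (A :: ('a::finite ^ 'n) set set)"
  by (rule finite_subset[OF subset_UNIV]) simp

lemma Grass_dim_Int_le: "U \<in> Grass r \<Longrightarrow> vec.dim (U \<inter> W) \<le> r"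
  using vec.dim_subset[of "U \<inter> W" U] by (auto simp: Grass_def)

lemma inj_dist_Grass:
  assumes U: "U \<in> Grass r" and W: "W \<in> Grass r"
  shows "inj_dist U W = r - vec.dim (U \<inter> W)"
  using dim_sub_sum_Int[of U W] U W by (simp add: inj_dist_def Grass_def)

lemma mem_ball_I_iff:
  assumes "U \<in> Grass r"
  shows "W \<in> ball_I r u U \<longleftrightarrow> W \<in> Grass r \<and> r - u \<le> vec.dim (U \<inter> W)"
  using inj_dist_Grass[OF assms] Grass_dim_Int_le[OF assms, of W] by (auto simp: ball_I_def)

lemma dim_image_inj:
  assumes "Vector_Spaces.linear (*s) (*s) g" "inj g"
  shows "vec.dim (g ` W) = vec.dim W"
  using vec.dim_image_eq[OF assms(1)] assms(2) by (simp add: inj_on_def inj_def)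

lemma image_Grass:
  assumes g: "Vector_Spaces.linear (*s) (*s) g" "inj g" and W: "W \<in> Grass r"
  shows "g ` W \<in> Grass r"
  using W vec.linear_subspace_image[OF g(1)] dim_image_inj[OF g] by (simp add: Grass_def)

lemma card_ball_I_Int_le_of_iso:
  fixes g :: "'a::{field,finite} ^ 'n \<Rightarrow> 'a ^ 'n"
  assumes g: "Vector_Spaces.linear (*s) (*s) g" "inj g"
    and Grass: "U1 \<in> Grass r" "V1 \<in> Grass r" "U2 \<in> Grass r" "V2 \<in> Grass r"
    and images: "g ` U1 = U2" "g ` V1 = V2"
  shows "card (ball_I r u U1 \<inter> ball_I r s V1) \<le> card (ball_I r u U2 \<inter> ball_I r s V2)"
proof (rule card_inj_on_le[of "image g"])
  show "inj_on (image g) (ball_I r u U1 \<inter> ball_I r s V1)"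
    using g(2) by (simp add: inj_on_def inj_image_eq_iff)
  have dims: "vec.dim (X \<inter> g ` W) = vec.dim (Y \<inter> W)" if "g ` Y = X" for X Y W
    using that image_Int[OF g(2), of Y W] dim_image_inj[OF g, of "Y \<inter> W"] by simp
  show "image g ` (ball_I r u U1 \<inter> ball_I r s V1) \<subseteq> ball_I r u U2 \<inter> ball_I r s V2"
  proof
    fix X assume "X \<in> image g ` (ball_I r u U1 \<inter> ball_I r s V1)"
    then obtain W where "X = g ` W" "W \<in> ball_I r u U1" "W \<in> ball_I r s V1" by auto
    then show "X \<in> ball_I r u U2 \<inter> ball_I r s V2"
      using dims[OF images(1), of W] dims[OF images(2), of W] image_Grass[OF g]
      by (simp add: mem_ball_I_iff Grass)
  qed
qed (rule finite_set_of_subspaces)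

lemma card_ball_I_Int_le_of_dim_Int_eq:
  fixes U1 V1 U2 V2 :: "('a::{field,finite} ^ 'n) set"
  assumes Grass: "U1 \<in> Grass r" "V1 \<in> Grass r" "U2 \<in> Grass r" "V2 \<in> Grass r"
    and eq: "vec.dim (U1 \<inter> V1) = vec.dim (U2 \<inter> V2)"
  shows "card (ball_I r u U1 \<inter> ball_I r s V1) \<le> card (ball_I r u U2 \<inter> ball_I r s V2)"
proof -
  obtain g where "Vector_Spaces.linear (*s) (*s) g" "inj g" "g ` U1 = U2" "g ` V1 = V2"
    using linear_iso_between_pairs[of U1 V1 U2 V2] Grass eq by (auto simp: Grass_def)
  then show ?thesis by (rule card_ball_I_Int_le_of_iso[OF _ _ Grass])
qed

section \<open>Moving \<open>V\<close> one step towards \<open>U\<close>\<close>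

locale separating_functionals =
  alpha: Vector_Spaces.linear "(*s)" "(*)" \<alpha> + beta: Vector_Spaces.linear "(*s)" "(*)" \<beta>
  for \<alpha> \<beta> :: "'a::{field,finite} ^ 'n \<Rightarrow> 'a" +
  fixes U V :: "('a ^ 'n) set" and r :: nat and a b :: "'a ^ 'n"
  assumes U_Grass: "U \<in> Grass r" and V_Grass: "V \<in> Grass r"
    and a_in_U: "a \<in> U" and b_in_V: "b \<in> V"
    and alpha_V: "v \<in> V \<Longrightarrow> \<alpha> v = 0" and beta_U: "v \<in> U \<Longrightarrow> \<beta> v = 0"
    and alpha_a [simp]: "\<alpha> a = 1" and beta_b [simp]: "\<beta> b = 1"
begin

definition "U0 = {v\<in>U. \<alpha> v = 0}"
definition "V0 = {v\<in>V. \<beta> v = 0}"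
definition "K = {v. \<alpha> v = 0 \<and> \<beta> v = 0}"
definition "V' = vec.span (insert a V0)"

lemma alpha_b [simp]: "\<alpha> b = 0" and beta_a [simp]: "\<beta> a = 0"
  using alpha_V[OF b_in_V] beta_U[OF a_in_U] .

lemma subspace_U: "vec.subspace U" and subspace_V: "vec.subspace V" and dim_V: "vec.dim V = r"
  using U_Grass V_Grass by (auto simp: Grass_def)

lemma subspace_U0: "vec.subspace U0"
  unfolding U0_def by (rule subspace_kernel_Int[OF subspace_U alpha.linear_axioms])

lemma subspace_V0: "vec.subspace V0"
  unfolding V0_def by (rule subspace_kernel_Int[OF subspace_V beta.linear_axioms])

lemma subspace_K: "vec.subspace K"
proof -
  have "K = {v. \<alpha> v = 0} \<inter> {v. \<beta> v = 0}" by (auto simp: K_def)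
  then show ?thesis using vec.subspace_inter alpha.subspace_kernel beta.subspace_kernel by metis
qed

lemma mem_K_iff: "v \<in> K \<longleftrightarrow> \<alpha> v = 0 \<and> \<beta> v = 0"
  by (simp add: K_def)

lemma U0_subset_K: "U0 \<subseteq> K" and V0_subset_K: "V0 \<subseteq> K"
  and U0_subset_U: "U0 \<subseteq> U" and V0_subset_V: "V0 \<subseteq> V"
  using alpha_V beta_U by (auto simp: U0_def V0_def K_def)

lemma V0_eq: "V0 = V \<inter> K"
  using alpha_V by (auto simp: V0_def K_def)

lemma mem_V'_iff: "x \<in> V' \<longleftrightarrow> (\<exists>k. x - k *s a \<in> V0)"
  unfolding V'_def vec.span_breakdown_eq vec.span_eq_iff[THEN iffD2, OF subspace_V0] ..

lemma V0_subset_V': "V0 \<subseteq> V'" and a_in_V': "a \<in> V'"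
  unfolding V'_def by (auto intro: vec.span_base)

lemma dim_V0: "vec.dim V0 + 1 = r"
proof -
  have "vec.dim V \<le> vec.dim V0 + 1"
    unfolding V0_def by (rule dim_le_Suc_dim_kernel[OF subspace_V beta.linear_axioms])
  moreover have "vec.dim V0 + 1 \<le> vec.dim V"
    by (rule dim_Suc_le_of_insert_subset[OF subspace_V0, of b]) (use b_in_V in \<open>auto simp: V0_def\<close>)
  ultimately show ?thesis using dim_V by simp
qed

lemma V'_Grass: "V' \<in> Grass r"
proof -
  have "a \<notin> vec.span V0"
    unfolding vec.span_eq_iff[THEN iffD2, OF subspace_V0] using V0_subset_K by (auto simp: mem_K_iff)
  then show ?thesis using dim_V0 by (simp add: V'_def Grass_def vec.dim_insert)
qed

lemma dim_U_Int_V': "vec.dim (U \<inter> V') = vec.dim (U \<inter> V) + 1"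
proof -
  have "U \<inter> V \<subseteq> V0" using beta_U by (auto simp: V0_def)
  then have "vec.dim (U \<inter> V) + 1 \<le> vec.dim (U \<inter> V')"
    using a_in_U a_in_V' V0_subset_V' alpha_V[of a]
    by (intro dim_Suc_le_of_insert_subset[OF vec.subspace_inter[OF subspace_U subspace_V]]) auto
  moreover have "vec.dim (U \<inter> V') \<le> vec.dim {x\<in>U \<inter> V'. \<alpha> x = 0} + 1"
    using V'_Grass subspace_U
    by (intro dim_le_Suc_dim_kernel alpha.linear_axioms vec.subspace_inter) (auto simp: Grass_def)
  moreover have "{x\<in>U \<inter> V'. \<alpha> x = 0} \<subseteq> U \<inter> V"
  proof
    fix x assume x: "x \<in> {x\<in>U \<inter> V'. \<alpha> x = 0}"
    then obtain k where k: "x - k *s a \<in> V0" using mem_V'_iff by auto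
    then have "k = 0" using x V0_subset_K by (auto simp: mem_K_iff alpha.diff alpha.scale)
    then show "x \<in> U \<inter> V" using k x V0_subset_V by auto
  qed
  then have "vec.dim {x\<in>U \<inter> V'. \<alpha> x = 0} \<le> vec.dim (U \<inter> V)" by (rule vec.dim_subset)
  ultimately show ?thesis by simp
qed

definition "exchange v = v + (\<beta> v - \<alpha> v) *s a + (\<alpha> v - \<beta> v) *s b"
definition "shear z v = v + (\<beta> v - \<alpha> v) *s z"

lemma alpha_exchange [simp]: "\<alpha> (exchange v) = \<beta> v"
  and beta_exchange [simp]: "\<beta> (exchange v) = \<alpha> v"
  by (simp_all add: exchange_def alpha.add alpha.diff alpha.scale beta.add beta.diff beta.scale)

lemma exchange_exchange [simp]: "exchange (exchange v) = v"
  by (simp add: exchange_def[of "exchange v"]) (simp add: exchange_def vec.scale_left_diff_distrib)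

lemma exchange_K: "v \<in> K \<Longrightarrow> exchange v = v"
  by (simp add: exchange_def K_def)

lemma exchange_a: "exchange a = b"
  by (simp add: exchange_def)

lemma linear_exchange: "Vector_Spaces.linear (*s) (*s) exchange"
  by (rule linear_of_add_scale)
    (simp_all add: exchange_def alpha.add alpha.scale beta.add beta.scale algebra_simps)

lemma inj_exchange: "inj exchange"
  by (rule injI) (metis exchange_exchange)

lemma exchange_image_V': "exchange ` V' = V"
proof -
  have "exchange ` V0 = V0" using exchange_K V0_subset_K by (force simp: image_iff)
  then have "exchange ` V' = vec.span (insert b V0)"
    unfolding V'_def vec.linear_span_image[OF linear_exchange, symmetric] by (simp add: exchange_a)
  also have "\<dots> = V"
  proof (rule subset_antisym)
    show "vec.span (insert b V0) \<subseteq> V"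
      by (rule vec.span_minimal[OF _ subspace_V]) (use b_in_V V0_subset_V in auto)
    show "V \<subseteq> vec.span (insert b V0)"
    proof
      fix v assume v: "v \<in> V"
      then have "v - \<beta> v *s b \<in> V0"
        using b_in_V by (simp add: V0_def vec.subspace_diff[OF subspace_V]
            vec.subspace_scale[OF subspace_V] beta.diff beta.scale)
      then show "v \<in> vec.span (insert b V0)"
        by (subst vec.span_breakdown_eq) (blast intro: vec.span_base)
    qed
  qed
  finally show ?thesis .
qed

lemma exchange_image_V: "exchange ` V = V'"
proof -
  have "exchange ` V = exchange ` exchange ` V'" by (simp add: exchange_image_V')
  also have "\<dots> = V'" by (simp add: image_comp comp_def)
  finally show ?thesis .
qed

lemma alpha_shear [simp]: "z \<in> K \<Longrightarrow> \<alpha> (shear z v) = \<alpha> v"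
  and beta_shear [simp]: "z \<in> K \<Longrightarrow> \<beta> (shear z v) = \<beta> v"
  by (simp_all add: shear_def alpha.add alpha.diff alpha.scale beta.add beta.diff beta.scale K_def)

lemma shear_K: "v \<in> K \<Longrightarrow> shear z v = v"
  by (simp add: shear_def K_def)

lemma shear_uminus_shear: "z \<in> K \<Longrightarrow> shear (- z) (shear z v) = v"
  by (simp add: shear_def[of "- z"]) (simp add: shear_def)

lemma shear_uminus_image: "z \<in> K \<Longrightarrow> shear (- z) ` shear z ` W = W"
  by (simp add: image_comp comp_def shear_uminus_shear)

lemma linear_shear: "Vector_Spaces.linear (*s) (*s) (shear z)"
  by (rule linear_of_add_scale)
    (simp_all add: shear_def alpha.add alpha.scale beta.add beta.scale algebra_simps)

lemma inj_shear: "z \<in> K \<Longrightarrow> inj (shear z)"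
  by (rule injI) (metis shear_uminus_shear)

lemma shear_image_Int_K:
  assumes z: "z \<in> K"
  shows "shear z ` W \<inter> K = W \<inter> K"
proof (intro set_eqI iffI)
  fix x assume "x \<in> shear z ` W \<inter> K"
  then obtain v where "v \<in> W" "x = shear z v" "x \<in> K" by auto
  then show "x \<in> W \<inter> K" using z by (auto simp: mem_K_iff shear_K)
next
  fix x assume "x \<in> W \<inter> K"
  then show "x \<in> shear z ` W \<inter> K" by (auto simp: shear_K intro: image_eqI[of x _ x])
qed

lemma shear_plus_a: "e \<in> K \<Longrightarrow> shear z (e + a) = (e - z) + a"
  by (simp add: shear_def alpha.add beta.add K_def algebra_simps)

lemma shear_plus_b: "g \<in> K \<Longrightarrow> shear z (g + b) = (g + z) + b"
  by (simp add: shear_def alpha.add beta.add K_def algebra_simps)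

definition "U0_plus D = sub_sum U0 D"
definition "V0_plus D = sub_sum V0 D"
definition "common D = U0_plus D \<inter> V0_plus D"
definition "common_compl D = (SOME C. vec.subspace C \<and> C \<subseteq> U0_plus D \<and> C \<inter> common D \<subseteq> {0}
    \<and> (\<forall>x\<in>U0_plus D. \<exists>y\<in>C. x - y \<in> common D))"

context
  fixes D assumes D: "vec.subspace D" "D \<subseteq> K"
begin

lemma subspace_U0_plus: "vec.subspace (U0_plus D)"
  and subspace_V0_plus: "vec.subspace (V0_plus D)"
  unfolding U0_plus_def V0_plus_def using subspace_sub_sum D subspace_U0 subspace_V0 by blast+

lemma U0_plus_subset_K: "U0_plus D \<subseteq> K"
  unfolding U0_plus_def using U0_subset_K D
  by (auto elim!: sub_sum_memE intro: vec.subspace_add[OF subspace_K])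

lemma V0_subset_V0_plus: "V0 \<subseteq> V0_plus D"
  unfolding V0_plus_def by (rule sub_sum_left[OF D(1)])

lemma common_compl:
  "vec.subspace (common_compl D)" "common_compl D \<subseteq> U0_plus D"
  "common_compl D \<inter> common D \<subseteq> {0}" "x \<in> U0_plus D \<Longrightarrow> \<exists>y\<in>common_compl D. x - y \<in> common D"
proof -
  have "vec.subspace (common D)"
    unfolding common_def by (rule vec.subspace_inter[OF subspace_U0_plus subspace_V0_plus])
  moreover have "common D \<subseteq> U0_plus D" by (auto simp: common_def)
  ultimately have "vec.subspace (common_compl D) \<and> common_compl D \<subseteq> U0_plus D
    \<and> common_compl D \<inter> common D \<subseteq> {0} \<and> (\<forall>x\<in>U0_plus D. \<exists>y\<in>common_compl D. x - y \<in> common D)"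
    unfolding common_compl_def by (rule someI_ex[OF complement_subspace_exists[OF _ subspace_U0_plus]])
  then show "vec.subspace (common_compl D)" "common_compl D \<subseteq> U0_plus D"
    "common_compl D \<inter> common D \<subseteq> {0}" "x \<in> U0_plus D \<Longrightarrow> \<exists>y\<in>common_compl D. x - y \<in> common D"
    by simp_all
qed

lemma common_compl_V0_plus_eq_0:
  assumes "z \<in> common_compl D" "z \<in> V0_plus D"
  shows "z = 0"
  using assms common_compl(2,3) by (auto simp: common_def)

end

definition "needs_shear i j W \<longleftrightarrow> W \<in> Grass r \<and> i \<le> vec.dim (U \<inter> W) \<and> j \<le> vec.dim (V \<inter> W)
   \<and> vec.dim (W \<inter> U0) < i \<and> vec.dim (V' \<inter> W) < j"

text \<open>
  A vector \<open>e + a \<in> W\<close> with \<open>e \<in> K\<close> is only determined modulo \<open>W \<inter> K\<close>. Its component \<open>z\<close> in a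
  fixed complement of \<open>common (W \<inter> K)\<close> depends only on \<open>W \<inter> K\<close>, and the remainder \<open>e - z\<close> lies
  in both \<open>U0_plus (W \<inter> K)\<close> and \<open>V0_plus (W \<inter> K)\<close>; this is what the shear by \<open>z\<close> exploits.
\<close>

definition "lift_a W = (SOME e. e \<in> K \<and> e + a \<in> W)"
definition "shear_vec W = (SOME z. z \<in> common_compl (W \<inter> K) \<and> lift_a W - z \<in> common (W \<inter> K))"

lemma dim_U_Int_le:
  assumes "vec.subspace W"
  shows "vec.dim (U \<inter> W) \<le> vec.dim (W \<inter> U0) + 1"
proof -
  have "{x\<in>U \<inter> W. \<alpha> x = 0} = W \<inter> U0" by (auto simp: U0_def)
  then show ?thesis
    using dim_le_Suc_dim_kernel[OF vec.subspace_inter[OF subspace_U assms] alpha.linear_axioms] by simp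
qed

lemma dim_V_Int_le:
  assumes "vec.subspace W"
  shows "vec.dim (V \<inter> W) \<le> vec.dim (W \<inter> V0) + 1"
proof -
  have "{x\<in>V \<inter> W. \<beta> x = 0} = W \<inter> V0" by (auto simp: V0_def)
  then show ?thesis
    using dim_le_Suc_dim_kernel[OF vec.subspace_inter[OF subspace_V assms] beta.linear_axioms] by simp
qed

lemma dim_U_Int_ge:
  assumes W: "vec.subspace W" and m: "m \<in> U0" "m + a \<in> W"
  shows "vec.dim (W \<inter> U0) + 1 \<le> vec.dim (U \<inter> W)"
proof (rule dim_Suc_le_of_insert_subset[OF vec.subspace_inter[OF W subspace_U0]])
  show "m + a \<notin> W \<inter> U0" using m by (auto simp: U0_def alpha.add)
  show "insert (m + a) (W \<inter> U0) \<subseteq> U \<inter> W"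
    using m a_in_U U0_subset_U vec.subspace_add[OF subspace_U] by auto
qed

lemma dim_V'_Int_ge:
  assumes W: "vec.subspace W" and h: "h \<in> V0" "h + a \<in> W"
  shows "vec.dim (W \<inter> V0) + 1 \<le> vec.dim (V' \<inter> W)"
proof (rule dim_Suc_le_of_insert_subset[OF vec.subspace_inter[OF W subspace_V0]])
  have "\<alpha> (h + a) = 1" using h(1) V0_subset_K by (auto simp: mem_K_iff alpha.add)
  then show "h + a \<notin> W \<inter> V0" using V0_subset_K by (auto simp: mem_K_iff)
  have "h + a \<in> V'" unfolding mem_V'_iff using h by (intro exI[of _ 1]) simp
  then show "insert (h + a) (W \<inter> V0) \<subseteq> V' \<inter> W" using h V0_subset_V' by auto
qed

lemma needs_shearD:
  assumes "needs_shear i j W"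
  shows "vec.subspace W" "i \<le> vec.dim (W \<inter> U0) + 1" "j \<le> vec.dim (W \<inter> V0) + 1"
    "vec.dim (W \<inter> V0) < j" "\<exists>m\<in>U0. m + a \<in> W" "\<exists>h\<in>V0. h + b \<in> W"
    "\<not> (\<exists>h\<in>V0. h + a \<in> W)"
proof -
  show W: "vec.subspace W" using assms by (simp add: needs_shear_def Grass_def)
  show "i \<le> vec.dim (W \<inter> U0) + 1" "j \<le> vec.dim (W \<inter> V0) + 1"
    using assms dim_U_Int_le[OF W] dim_V_Int_le[OF W] by (auto simp: needs_shear_def)
  have "vec.dim (W \<inter> V0) \<le> vec.dim (V' \<inter> W)" using V0_subset_V' by (intro vec.dim_subset) auto
  then show lt: "vec.dim (W \<inter> V0) < j" using assms by (simp add: needs_shear_def)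
  show "\<exists>m\<in>U0. m + a \<in> W"
    using ex_kernel_plus_in[OF subspace_U W alpha.linear_axioms a_in_U] assms
    by (auto simp: needs_shear_def U0_def)
  show "\<exists>h\<in>V0. h + b \<in> W"
    using ex_kernel_plus_in[OF subspace_V W beta.linear_axioms b_in_V] assms lt
    by (auto simp: needs_shear_def V0_def)
  show "\<not> (\<exists>h\<in>V0. h + a \<in> W)"
  proof
    assume "\<exists>h\<in>V0. h + a \<in> W"
    then obtain h where "h \<in> V0" "h + a \<in> W" by blast
    from dim_V'_Int_ge[OF W this] assms dim_V_Int_le[OF W] show False
      by (simp add: needs_shear_def)
  qed
qed

lemma needs_shear_K:
  assumes "needs_shear i j W"
  shows "vec.subspace (W \<inter> K)" "W \<inter> K \<subseteq> K"
  using vec.subspace_inter[OF needs_shearD(1)[OF assms] subspace_K] by auto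

lemma lift_a:
  assumes c: "needs_shear i j W"
  shows "lift_a W \<in> K" "lift_a W + a \<in> W" "lift_a W \<in> U0_plus (W \<inter> K)"
proof -
  have W: "vec.subspace W" by (rule needs_shearD(1)[OF c])
  obtain m where m: "m \<in> U0" "m + a \<in> W" using needs_shearD(5)[OF c] by blast
  have mK: "m \<in> K" using m U0_subset_K by blast
  then have "\<exists>e. e \<in> K \<and> e + a \<in> W" using m(2) by blast
  then have e: "lift_a W \<in> K \<and> lift_a W + a \<in> W"
    unfolding lift_a_def by (rule someI_ex)
  then show "lift_a W \<in> K" "lift_a W + a \<in> W" by simp_all
  have "lift_a W - m \<in> W"
    using vec.subspace_diff[OF W, of "lift_a W + a" "m + a"] e m(2) by simp
  then have "lift_a W - m \<in> W \<inter> K" using e mK vec.subspace_diff[OF subspace_K] by simp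
  then have "m + (lift_a W - m) \<in> U0_plus (W \<inter> K)"
    unfolding U0_plus_def using m(1) by (rule sub_sum_memI[rotated])
  then show "lift_a W \<in> U0_plus (W \<inter> K)" by simp
qed

lemma shear_vec:
  assumes c: "needs_shear i j W"
  shows "shear_vec W \<in> common_compl (W \<inter> K)" "lift_a W - shear_vec W \<in> common (W \<inter> K)"
    "shear_vec W \<in> K"
proof -
  note D = needs_shear_K[OF c]
  have "\<exists>z. z \<in> common_compl (W \<inter> K) \<and> lift_a W - z \<in> common (W \<inter> K)"
    using common_compl(4)[OF D lift_a(3)[OF c]] by blast
  then have z: "shear_vec W \<in> common_compl (W \<inter> K) \<and> lift_a W - shear_vec W \<in> common (W \<inter> K)"
    unfolding shear_vec_def by (rule someI_ex)
  then show "shear_vec W \<in> common_compl (W \<inter> K)" "lift_a W - shear_vec W \<in> common (W \<inter> K)"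
    by simp_all
  then show "shear_vec W \<in> K" using common_compl(2)[OF D] U0_plus_subset_K[OF D] by blast
qed

lemma needs_shear_image:
  assumes c: "needs_shear i j W"
  defines "X \<equiv> shear (shear_vec W) ` W"
  shows "X \<in> Grass r" "X \<inter> K = W \<inter> K" "i \<le> vec.dim (U \<inter> X)" "j \<le> vec.dim (V' \<inter> X)"
proof -
  let ?z = "shear_vec W" and ?e = "lift_a W" and ?D = "W \<inter> K"
  note D = needs_shear_K[OF c]
  have zK: "?z \<in> K" by (rule shear_vec(3)[OF c])
  show XG: "X \<in> Grass r"
    unfolding X_def using c by (intro image_Grass[OF linear_shear inj_shear[OF zK]]) (simp add: needs_shear_def)
  have sX: "vec.subspace X" using XG by (simp add: Grass_def)
  show XK: "X \<inter> K = W \<inter> K" unfolding X_def by (rule shear_image_Int_K[OF zK])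
  have eX: "(?e - ?z) + a \<in> X"
    using shear_plus_a[OF lift_a(1)[OF c], of ?z] lift_a(2)[OF c] unfolding X_def by (metis image_eqI)
  have ez: "?e - ?z \<in> common ?D" by (rule shear_vec(2)[OF c])
  have plus_a_in_X: "y + a \<in> X" if "?e - ?z = y + d" "d \<in> ?D" for y d
  proof -
    have "y + a = ((?e - ?z) + a) - d" using that(1) by (simp add: algebra_simps)
    also have "\<dots> \<in> X" using that(2) XK eX by (blast intro: vec.subspace_diff[OF sX])
    finally show ?thesis .
  qed
  obtain m d where m: "m \<in> U0" "d \<in> ?D" "?e - ?z = m + d"
    using ez unfolding common_def U0_plus_def by (blast elim: sub_sum_memE)
  have "X \<inter> U0 = W \<inter> U0" using XK U0_subset_K by blast
  then show "i \<le> vec.dim (U \<inter> X)"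
    using dim_U_Int_ge[OF sX m(1) plus_a_in_X[OF m(3,2)]] needs_shearD(2)[OF c] by simp
  obtain h d' where h: "h \<in> V0" "d' \<in> ?D" "?e - ?z = h + d'"
    using ez unfolding common_def V0_plus_def by (blast elim: sub_sum_memE)
  have "X \<inter> V0 = W \<inter> V0" using XK V0_subset_K by blast
  then show "j \<le> vec.dim (V' \<inter> X)"
    using dim_V'_Int_ge[OF sX h(1) plus_a_in_X[OF h(3,2)]] needs_shearD(3)[OF c] by simp
qed

lemma shear_vec_notin_V0_plus:
  assumes c: "needs_shear i j W"
  shows "shear_vec W \<notin> V0_plus (W \<inter> K)"
proof
  assume "shear_vec W \<in> V0_plus (W \<inter> K)"
  then have "shear_vec W = 0"
    by (rule common_compl_V0_plus_eq_0[OF needs_shear_K[OF c] shear_vec(1)[OF c]])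
  then have "lift_a W \<in> V0_plus (W \<inter> K)" using shear_vec(2)[OF c] by (simp add: common_def)
  then obtain h d where h: "h \<in> V0" "d \<in> W \<inter> K" "lift_a W = h + d"
    unfolding V0_plus_def by (rule sub_sum_memE)
  have "h + a \<in> W"
    using vec.subspace_diff[OF needs_shearD(1)[OF c] lift_a(2)[OF c], of d] h
    by (simp add: algebra_simps)
  then show False using needs_shearD(7)[OF c] h(1) by blast
qed

lemma V_Int_shear_image_subset:
  assumes c: "needs_shear i j W"
  shows "V \<inter> shear (shear_vec W) ` W \<subseteq> W \<inter> V0"
proof
  let ?z = "shear_vec W" and ?D = "W \<inter> K"
  have W: "vec.subspace W" by (rule needs_shearD(1)[OF c])
  have zK: "?z \<in> K" by (rule shear_vec(3)[OF c])
  note D = needs_shear_K[OF c]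
  fix x assume x: "x \<in> V \<inter> shear ?z ` W"
  then obtain v where v: "v \<in> W" "x = shear ?z v" by auto
  have "\<alpha> x = 0" using x alpha_V by blast
  then have av: "\<alpha> v = 0" and bv: "\<beta> v = \<beta> x" using v zK by auto
  have "\<beta> x = 0"
  proof (rule ccontr)
    assume k: "\<beta> x \<noteq> 0"
    define w where "w = (1 / \<beta> x) *s v"
    define g where "g = w - b"
    have w: "w \<in> W" "shear ?z w \<in> V"
      using v x k vec.subspace_scale[OF W] vec.subspace_scale[OF subspace_V]
      by (auto simp: w_def vec.linear_scale[OF linear_shear])
    have gK: "g \<in> K"
      using av bv k by (simp add: g_def w_def mem_K_iff alpha.diff alpha.scale beta.diff beta.scale)
    obtain h0 where h0: "h0 \<in> V0" "h0 + b \<in> W" using needs_shearD(6)[OF c] by blast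
    have "g - h0 \<in> W"
      using vec.subspace_diff[OF W w(1) h0(2)] by (simp add: g_def algebra_simps)
    moreover have "g - h0 \<in> K" using gK h0(1) V0_subset_K vec.subspace_diff[OF subspace_K] by blast
    ultimately have "h0 + (g - h0) \<in> V0_plus ?D" unfolding V0_plus_def using h0(1) by (blast intro: sub_sum_memI)
    then have gV: "g \<in> V0_plus ?D" by simp
    have "shear ?z w = (g + ?z) + b" using shear_plus_b[OF gK, of ?z] by (simp add: g_def)
    then have "g + ?z \<in> V"
      using vec.subspace_diff[OF subspace_V w(2) b_in_V] by simp
    moreover have "g + ?z \<in> K" using gK zK vec.subspace_add[OF subspace_K] by blast
    ultimately have "g + ?z \<in> V0_plus ?D" using V0_eq V0_subset_V0_plus[OF D] by blast
    then have "(g + ?z) - g \<in> V0_plus ?D" by (rule vec.subspace_diff[OF subspace_V0_plus[OF D] _ gV])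
    then show False using shear_vec_notin_V0_plus[OF c] by simp
  qed
  then have "x \<in> V0" using x by (simp add: V0_def)
  then show "x \<in> W \<inter> V0" using x shear_image_Int_K[OF zK, of W] V0_subset_K by blast
qed

lemma shear_image_inj:
  assumes c1: "needs_shear i j W1" and c2: "needs_shear i j W2"
    and eq: "shear (shear_vec W1) ` W1 = shear (shear_vec W2) ` W2"
  shows "W1 = W2"
proof -
  let ?X = "shear (shear_vec W1) ` W1" and ?z1 = "shear_vec W1" and ?z2 = "shear_vec W2"
  let ?D = "W1 \<inter> K"
  note D = needs_shear_K[OF c1]
  have z1K: "?z1 \<in> K" and z2K: "?z2 \<in> K" using shear_vec(3) c1 c2 by blast+
  have XK: "?X \<inter> K = ?D" by (rule shear_image_Int_K[OF z1K])
  have DD: "W2 \<inter> K = ?D" using eq shear_image_Int_K[OF z2K, of W2] XK by simp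
  have sX: "vec.subspace ?X" using needs_shear_image(1)[OF c1] by (simp add: Grass_def)
  obtain h1 where h1: "h1 \<in> V0" "h1 + b \<in> W1" using needs_shearD(6)[OF c1] by blast
  obtain h2 where h2: "h2 \<in> V0" "h2 + b \<in> W2" using needs_shearD(6)[OF c2] by blast
  have h1K: "h1 \<in> K" and h2K: "h2 \<in> K" using h1 h2 V0_subset_K by blast+
  have "(h1 + ?z1) + b \<in> ?X" using shear_plus_b[OF h1K, of ?z1] h1(2) by (metis image_eqI)
  moreover have "(h2 + ?z2) + b \<in> ?X" using shear_plus_b[OF h2K, of ?z2] h2(2) eq by (metis image_eqI)
  ultimately have "((h1 + ?z1) + b) - ((h2 + ?z2) + b) \<in> ?X" by (rule vec.subspace_diff[OF sX])
  then have "(h1 + ?z1) - (h2 + ?z2) \<in> ?X" by simp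
  moreover have "(h1 + ?z1) - (h2 + ?z2) \<in> K"
    using h1K h2K z1K z2K vec.subspace_add[OF subspace_K] vec.subspace_diff[OF subspace_K] by simp
  ultimately have "(h1 + ?z1) - (h2 + ?z2) \<in> ?D" using XK by blast
  moreover have "h2 - h1 \<in> V0" using h1 h2 by (simp add: vec.subspace_diff[OF subspace_V0])
  ultimately have "(h2 - h1) + ((h1 + ?z1) - (h2 + ?z2)) \<in> V0_plus ?D"
    unfolding V0_plus_def by (rule sub_sum_memI[rotated])
  then have "?z1 - ?z2 \<in> V0_plus ?D" by (simp add: algebra_simps)
  moreover have "?z1 - ?z2 \<in> common_compl ?D"
    using shear_vec(1)[OF c1] shear_vec(1)[OF c2] DD common_compl(1)[OF D]
    by (simp add: vec.subspace_diff)
  ultimately have "?z1 - ?z2 = 0" by (rule common_compl_V0_plus_eq_0[OF D, rotated])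
  then have "?z1 = ?z2" by simp
  then have "W1 = shear (- ?z2) ` shear ?z2 ` W2" using eq shear_uminus_image[OF z1K, of W1] by simp
  then show "W1 = W2" using shear_uminus_image[OF z2K] by simp
qed

definition "near i j X = {W \<in> Grass r. i \<le> vec.dim (U \<inter> W) \<and> j \<le> vec.dim (X \<inter> W)}"

definition "push i j W =
  (if i \<le> vec.dim (W \<inter> U0) then exchange ` W
   else if j \<le> vec.dim (V' \<inter> W) then W
   else shear (shear_vec W) ` W)"

lemma needs_shearI:
  "W \<in> near i j V \<Longrightarrow> \<not> i \<le> vec.dim (W \<inter> U0) \<Longrightarrow> \<not> j \<le> vec.dim (V' \<inter> W) \<Longrightarrow> needs_shear i j W"
  by (simp add: near_def needs_shear_def)

lemma dim_Int_U0_le_exchange: "vec.dim (W \<inter> U0) \<le> vec.dim (exchange ` W \<inter> U0)"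
proof (rule vec.dim_subset)
  show "W \<inter> U0 \<subseteq> exchange ` W \<inter> U0"
    using U0_subset_K exchange_K by force
qed

lemma push_in_near:
  assumes W: "W \<in> near i j V"
  shows "push i j W \<in> near i j V'"
proof (cases "i \<le> vec.dim (W \<inter> U0)")
  case True
  have WG: "W \<in> Grass r" and Wj: "j \<le> vec.dim (V \<inter> W)" using W by (auto simp: near_def)
  have "vec.dim (exchange ` W \<inter> U0) \<le> vec.dim (U \<inter> exchange ` W)"
    using U0_subset_U by (intro vec.dim_subset) auto
  then have "i \<le> vec.dim (U \<inter> exchange ` W)" using True dim_Int_U0_le_exchange[of W] by simp
  moreover have "V' \<inter> exchange ` W = exchange ` (V \<inter> W)"
    using exchange_image_V inj_exchange by (simp add: image_Int)
  then have "vec.dim (V' \<inter> exchange ` W) = vec.dim (V \<inter> W)"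
    using dim_image_inj[OF linear_exchange inj_exchange] by simp
  ultimately show ?thesis
    using True Wj image_Grass[OF linear_exchange inj_exchange WG] by (simp add: push_def near_def)
next
  case False
  then show ?thesis
    using W needs_shear_image[OF needs_shearI[OF W False]] by (auto simp: push_def near_def)
qed

lemma push_U0_iff:
  assumes W: "W \<in> near i j V"
  shows "i \<le> vec.dim (push i j W \<inter> U0) \<longleftrightarrow> i \<le> vec.dim (W \<inter> U0)"
proof (cases "i \<le> vec.dim (W \<inter> U0)")
  case True
  then show ?thesis using dim_Int_U0_le_exchange[of W] by (simp add: push_def)
next
  case False
  have "push i j W \<inter> U0 = W \<inter> U0"
  proof (cases "j \<le> vec.dim (V' \<inter> W)")
    case False': False
    then show ?thesis
      using False needs_shear_image(2)[OF needs_shearI[OF W False False']] U0_subset_K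
      by (auto simp: push_def)
  qed (use False in \<open>simp add: push_def\<close>)
  then show ?thesis by simp
qed

lemma push_V_iff:
  assumes W: "W \<in> near i j V" and not_U0: "\<not> i \<le> vec.dim (W \<inter> U0)"
  shows "j \<le> vec.dim (V \<inter> push i j W) \<longleftrightarrow> j \<le> vec.dim (V' \<inter> W)"
proof (cases "j \<le> vec.dim (V' \<inter> W)")
  case True
  then show ?thesis using W not_U0 by (simp add: push_def near_def)
next
  case False
  have c: "needs_shear i j W" by (rule needs_shearI[OF W not_U0 False])
  have "vec.dim (V \<inter> push i j W) \<le> vec.dim (W \<inter> V0)"
    using V_Int_shear_image_subset[OF c] not_U0 False by (simp add: push_def vec.dim_subset)
  then show ?thesis using needs_shearD(4)[OF c] False by simp
qed

lemma inj_on_push: "inj_on (push i j) (near i j V)"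
proof (rule inj_onI)
  fix W1 W2 assume W1: "W1 \<in> near i j V" and W2: "W2 \<in> near i j V"
    and eq: "push i j W1 = push i j W2"
  consider (exchange) "i \<le> vec.dim (W1 \<inter> U0)" "i \<le> vec.dim (W2 \<inter> U0)"
    | (identity) "\<not> i \<le> vec.dim (W1 \<inter> U0)" "\<not> i \<le> vec.dim (W2 \<inter> U0)"
        "j \<le> vec.dim (V' \<inter> W1)" "j \<le> vec.dim (V' \<inter> W2)"
    | (shear) "\<not> i \<le> vec.dim (W1 \<inter> U0)" "\<not> i \<le> vec.dim (W2 \<inter> U0)"
        "\<not> j \<le> vec.dim (V' \<inter> W1)" "\<not> j \<le> vec.dim (V' \<inter> W2)"
    using push_U0_iff[OF W1] push_U0_iff[OF W2] push_V_iff[OF W1] push_V_iff[OF W2] eq by metis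
  then show "W1 = W2"
  proof cases
    case exchange
    then show ?thesis using eq inj_exchange by (simp add: push_def inj_image_eq_iff)
  next
    case identity
    then show ?thesis using eq by (simp add: push_def)
  next
    case shear
    then show ?thesis
      using eq shear_image_inj needs_shearI[OF W1] needs_shearI[OF W2] by (simp add: push_def)
  qed
qed

lemma card_near_V_le: "card (near i j V) \<le> card (near i j V')"
  using card_inj_on_le[OF inj_on_push _ finite_set_of_subspaces] push_in_near by blast

end

lemma exists_Grass_closer_card_ball_I_le:
  fixes U V :: "('a::{field,finite} ^ 'n) set"
  assumes UG: "U \<in> Grass r" and VG: "V \<in> Grass r" and lt: "vec.dim (U \<inter> V) < r"
  obtains V' where "V' \<in> Grass r" "vec.dim (U \<inter> V') = vec.dim (U \<inter> V) + 1"
    "card (ball_I r u U \<inter> ball_I r s V) \<le> card (ball_I r u U \<inter> ball_I r s V')"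
proof -
  have sU: "vec.subspace U" and sV: "vec.subspace V" and dU: "vec.dim U = r" and dV: "vec.dim V = r"
    using UG VG by (auto simp: Grass_def)
  have "\<not> U \<subseteq> V"
  proof
    assume "U \<subseteq> V"
    then have "U \<inter> V = U" by blast
    then show False using lt dU by simp
  qed
  then obtain a where a: "a \<in> U" "a \<notin> V" by blast
  have "\<not> V \<subseteq> U"
  proof
    assume "V \<subseteq> U"
    then have "U \<inter> V = V" by blast
    then show False using lt dV by simp
  qed
  then obtain b where b: "b \<in> V" "b \<notin> U" by blast
  obtain \<alpha> where \<alpha>: "Vector_Spaces.linear (*s) (*) \<alpha>" "\<forall>v\<in>V. \<alpha> v = 0" "\<alpha> a = 1"
    using separating_functional_exists[OF sV a(2)] by blast
  obtain \<beta> where \<beta>: "Vector_Spaces.linear (*s) (*) \<beta>" "\<forall>v\<in>U. \<beta> v = 0" "\<beta> b = 1"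
    using separating_functional_exists[OF sU b(2)] by blast
  interpret separating_functionals \<alpha> \<beta> U V r a b
    by (intro separating_functionals.intro separating_functionals_axioms.intro \<alpha>(1) \<beta>(1))
      (use \<alpha> \<beta> UG VG a b in auto)
  have balls: "ball_I r u U \<inter> ball_I r s X = near (r - u) (r - s) X" if "X \<in> Grass r" for X
    using mem_ball_I_iff[OF UG] mem_ball_I_iff[OF that] by (auto simp: near_def)
  show ?thesis
    using that[OF V'_Grass dim_U_Int_V'] card_near_V_le balls[OF VG] balls[OF V'_Grass] by simp
qed

theorem proposition4:
  fixes U V U' V' :: "('a::{field,finite}, 'n::finite) vec set"
  assumes "r \<le> CARD('n) div 2"
    and "u \<le> r" and "s \<le> r"
    and "1 \<le> d" and "d \<le> r"
    and "U \<in> Grass r" and "V \<in> Grass r" and "inj_dist U V = d"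
    and "U' \<in> Grass r" and "V' \<in> Grass r" and "inj_dist U' V' = d - 1"
  shows "card (ball_I r u U \<inter> ball_I r s V) \<le> card (ball_I r u U' \<inter> ball_I r s V')"
proof -
  have d: "r - vec.dim (U \<inter> V) = d" "vec.dim (U \<inter> V) \<le> r"
    using inj_dist_Grass[OF assms(6,7)] assms(8) Grass_dim_Int_le[OF assms(6)] by simp_all
  have d': "r - vec.dim (U' \<inter> V') = d - 1" "vec.dim (U' \<inter> V') \<le> r"
    using inj_dist_Grass[OF assms(9,10)] assms(11) Grass_dim_Int_le[OF assms(9)] by simp_all
  have "vec.dim (U \<inter> V) < r" using d assms(4) by linarith
  then obtain W where W: "W \<in> Grass r" "vec.dim (U \<inter> W) = vec.dim (U \<inter> V) + 1"
    and le: "card (ball_I r u U \<inter> ball_I r s V) \<le> card (ball_I r u U \<inter> ball_I r s W)"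
    by (rule exists_Grass_closer_card_ball_I_le[OF assms(6,7)])
  have "vec.dim (U \<inter> W) = vec.dim (U' \<inter> V')" using W(2) d d' assms(4) by linarith
  then have "card (ball_I r u U \<inter> ball_I r s W) \<le> card (ball_I r u U' \<inter> ball_I r s V')"
    by (rule card_ball_I_Int_le_of_dim_Int_eq[OF assms(6) W(1) assms(9,10)])
  with le show ?thesis by (rule le_trans)
qed

end
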